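(* Let $\tilde d\in C^1(\mathbb{R})$ satisfy $\tilde d(0)=0$, $\tilde d'(m)>d_0$ and $|\tilde d'(m)|\le d_1+d_2|m|^p$ for all $m\in\mathbb{R}$, for some constants $d_0>0$ and $d_1,d_2,p\ge 0$. Then for any $\tilde f,\tilde g\in L^2(0,1)$ and $\tilde h=(\tilde h(0),\tilde h(1))\in\mathbb{R}^2$ the stationary system $$\partial_x\tilde m(x)=\tilde f(x),\quad \partial_x\tilde p(x)+\tilde d(\tilde m(x))=\tilde g(x)\quad (x\in(0,1)),\qquad \tilde p(x)=\tilde h(x)\quad (x\in\{0,1\})$$ has a unique solution $(\tilde p,\tilde m)\in H^1(0,1)\times H^1(0,1)$, and there exists a constant $c>0$, independent of $\tilde d$ and of $\tilde f,\tilde g,\tilde h$, such that $$\|\tilde m\|_{H^1}\le \frac{c}{d_0}\big(\|\tilde g\|_{L^2}+|\tilde h|_1+d_1\|\tilde f\|_{L^2}+d_2\|\tilde f\|_{L^2}^{p+1}\big)+c\|\tilde f\|_{L^2}=:M,$$ $$\|\tilde p\|_{H^1}\le c\big(\|\tilde g\|_{L^2}+|\tilde h|_1+d_1M+d_2M^{p+1}\big).$$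
   Context: $|\tilde h|_1=|\tilde h(0)|+|\tilde h(1)|$ denotes the $\ell^1$-norm on $\mathbb{R}^2$. $L^2$ and $H^1$ denote the usual Lebesgue and Sobolev spaces on $(0,1)$. *)

theory Defs
  imports "HOL-Analysis.Analysis"
begin

text \<open>Functions on (0,1) are represented by functions real => real; only values on [0,1] matter.\<close>

definition L2_01 :: "(real \<Rightarrow> real) \<Rightarrow> bool" where
  "L2_01 f \<longleftrightarrow> set_borel_measurable lborel {0..1} f
                \<and> set_integrable lborel {0..1} (\<lambda>x. (f x)\<^sup>2)"

definition L2_norm :: "(real \<Rightarrow> real) \<Rightarrow> real" where
  "L2_norm f = sqrt (LINT x:{0..1}|lborel. (f x)\<^sup>2)"

text \<open>v is the weak derivative of u on (0,1), u being (the absolutely continuous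
  representative of) an H^1 function: v in L^2 and u x = u 0 + int_0^x v for x in [0,1].\<close>
definition weak_deriv_01 :: "(real \<Rightarrow> real) \<Rightarrow> (real \<Rightarrow> real) \<Rightarrow> bool" where
  "weak_deriv_01 u v \<longleftrightarrow> L2_01 v \<and>
     (\<forall>x\<in>{0..1}. u x = u 0 + (LINT t:{0..x}|lborel. v t))"

definition H1_01 :: "(real \<Rightarrow> real) \<Rightarrow> bool" where
  "H1_01 u \<longleftrightarrow> (\<exists>v. weak_deriv_01 u v)"

definition H1_norm :: "(real \<Rightarrow> real) \<Rightarrow> real" where
  "H1_norm u = sqrt ((L2_norm u)\<^sup>2 + (L2_norm (SOME v. weak_deriv_01 u v))\<^sup>2)"

text \<open>Real power with the convention 0^0 = 1 (Isabelle's powr has 0 powr 0 = 0).\<close>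
definition rpow :: "real \<Rightarrow> real \<Rightarrow> real" where
  "rpow x a = (if a = 0 then 1 else x powr a)"

end

theory Submission
  imports Defs
begin

text \<open>
  Integrating the first equation gives \<open>m = a + F\<close> with \<open>F x = \<integral>\<^sub>0\<^sup>x f\<close>, so only
  the constant \<open>a = m 0\<close> is free; \<open>P\<close> is then determined by \<open>P 0 = h0\<close> and
  \<open>P' = g - d \<circ> m\<close>, and the remaining condition \<open>P 1 = h1\<close> becomes the scalar equation
  \<open>\<phi> a = h0 - h1 + \<integral>\<^sub>0\<^sup>1 g\<close> for the shooting function
  \<open>\<phi> a = \<integral>\<^sub>0\<^sup>1 d (a + F x) dx\<close>. Since \<open>d' > d0\<close>, \<open>\<phi>\<close> is continuous and grows at
  least at rate \<open>d0\<close>, so the equation has exactly one root, and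
  \<open>d0 * \<bar>a\<bar> \<le> \<bar>h0 - h1 + \<integral>\<^sub>0\<^sup>1 g - \<phi> 0\<bar>\<close>. The estimates, with \<open>c = 2\<close>, follow
  from \<open>\<bar>\<integral>\<^sub>0\<^sup>x u\<bar> \<le> \<parallel>u\<parallel>\<^sub>L\<^sub>2\<close> and the growth bound
  \<open>\<bar>d s\<bar> \<le> d1 * \<bar>s\<bar> + d2 * \<bar>s\<bar> powr (p + 1)\<close> given by the mean value theorem.
\<close>

section \<open>Square-integrable functions on the unit interval\<close>

lemma set_integrable_continuous_on_Icc:
  fixes k :: "real \<Rightarrow> real"
  assumes "continuous_on {a..b} k"
  shows "set_integrable lborel {a..b} k"
  unfolding set_integrable_def using borel_integrable_compact[of "{a..b}" k] assms by auto

lemma set_integrable_const_Icc: "set_integrable lborel {a..b::real} (\<lambda>_. c::real)"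
  by (rule set_integrable_continuous_on_Icc) simp

lemma set_integral_const_Icc:
  "a \<le> b \<Longrightarrow> (LINT x:{a..b}|lborel. (c::real)) = (b - a) * c"
  by (simp add: set_integral_const)

lemma set_integral_Icc_self: "(LINT t:{a..a::real}|lborel. (u t :: real)) = 0"
proof -
  have "AE t in lborel. indicator {a..a} t *\<^sub>R u t = 0"
    using AE_lborel_singleton[of a] by eventually_elim simp
  then show ?thesis
    unfolding set_lebesgue_integral_def by (rule integral_eq_zero_AE)
qed

lemma L2_01_set_integrable:
  assumes "L2_01 f"
  shows "set_integrable lborel {0..1} f"
proof (rule set_integrable_bound)
  show "set_integrable lborel {0..1::real} (\<lambda>x. 1 + (f x)\<^sup>2)"
    using assms set_integrable_const_Icc[of 0 1 1] by (simp add: L2_01_def)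
  show "set_borel_measurable lborel {0..1} f"
    using assms by (simp add: L2_01_def)
  have "\<bar>y\<bar> \<le> 1 + y\<^sup>2" for y :: real
    using zero_le_power2[of "\<bar>y\<bar> - 1"] abs_ge_zero[of y] by (simp add: power2_diff)
  then show "AE x in lborel. x \<in> {0..1} \<longrightarrow> norm (f x) \<le> norm (1 + (f x)\<^sup>2)"
    by simp
qed

lemma set_integral_square_nonneg: "0 \<le> (LINT x:{0..1::real}|lborel. (u x :: real)\<^sup>2)"
  unfolding set_lebesgue_integral_def
  by (rule Bochner_Integration.integral_nonneg) (simp add: indicator_def)

lemma L2_norm_nonneg: "0 \<le> L2_norm u"
  unfolding L2_norm_def using set_integral_square_nonneg by simp

lemma L2_norm_square: "(L2_norm u)\<^sup>2 = (LINT x:{0..1}|lborel. (u x)\<^sup>2)"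
  unfolding L2_norm_def using set_integral_square_nonneg by simp

lemma L1_norm_le_L2_norm:
  assumes "L2_01 u"
  shows "(LINT x:{0..1}|lborel. \<bar>u x\<bar>) \<le> L2_norm u"
proof -
  define a where "a = (LINT x:{0..1}|lborel. \<bar>u x\<bar>)"
  have u1: "set_integrable lborel {0..1} (\<lambda>x. \<bar>u x\<bar>)"
    using set_integrable_abs[OF L2_01_set_integrable[OF assms]] by simp
  have u2: "set_integrable lborel {0..1} (\<lambda>x. (u x)\<^sup>2)"
    using assms by (simp add: L2_01_def)
  have "0 \<le> (LINT x:{0..1}|lborel. (\<bar>u x\<bar> - a)\<^sup>2)"
    by (rule set_integral_square_nonneg)
  also have "\<dots> = (LINT x:{0..1}|lborel. ((u x)\<^sup>2 + a\<^sup>2) - 2 * a * \<bar>u x\<bar>)"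
    by (simp add: power2_diff algebra_simps)
  also have "\<dots> = (LINT x:{0..1}|lborel. (u x)\<^sup>2 + a\<^sup>2)
      - (LINT x:{0..1}|lborel. 2 * a * \<bar>u x\<bar>)"
    using set_integral_add(1)[OF u2 set_integrable_const_Icc] set_integrable_mult_right[OF u1]
    by (rule set_integral_diff(2))
  also have "\<dots> = (L2_norm u)\<^sup>2 - a\<^sup>2"
    unfolding set_integral_add(2)[OF u2 set_integrable_const_Icc] set_integral_mult_right
      L2_norm_square set_integral_const_Icc[OF zero_le_one] a_def[symmetric]
    by (simp add: power2_eq_square)
  finally have "a\<^sup>2 \<le> (L2_norm u)\<^sup>2"
    by simp
  then show ?thesis
    unfolding a_def[symmetric] using L2_norm_nonneg by (rule power2_le_imp_le)
qed

lemma abs_primitive_le_L2_norm: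
  assumes "L2_01 u" "x \<in> {0..1}"
  shows "\<bar>LINT t:{0..x}|lborel. u t\<bar> \<le> L2_norm u"
proof -
  have ux: "set_integrable lborel {0..x} u"
    using assms by (auto intro: set_integrable_subset[OF L2_01_set_integrable])
  have "\<bar>LINT t:{0..x}|lborel. u t\<bar> \<le> (LINT t:{0..x}|lborel. \<bar>u t\<bar>)"
    using set_integral_norm_bound[OF ux] by simp
  also have "\<dots> \<le> (LINT t:{0..1}|lborel. \<bar>u t\<bar>)"
    using set_integrable_abs[OF ux] set_integrable_abs[OF L2_01_set_integrable[OF assms(1)]] assms(2)
    unfolding set_lebesgue_integral_def set_integrable_def
    by (intro integral_mono) (auto split: split_indicator)
  also have "\<dots> \<le> L2_norm u"
    by (rule L1_norm_le_L2_norm[OF assms(1)])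
  finally show ?thesis .
qed

lemma L2_norm_le_if_bounded:
  assumes "\<forall>x\<in>{0..1}. \<bar>k x\<bar> \<le> B"
  shows "L2_norm k \<le> B"
proof -
  have B: "0 \<le> B"
    using assms by fastforce
  have "(LINT x:{0..1}|lborel. (k x)\<^sup>2) \<le> B\<^sup>2"
  proof (cases "set_integrable lborel {0..1::real} (\<lambda>x. (k x)\<^sup>2)")
    case True
    then have "(LINT x:{0..1}|lborel. (k x)\<^sup>2) \<le> (LINT x:{0..1::real}|lborel. B\<^sup>2)"
      using assms set_integrable_const_Icc[of 0 1 "B\<^sup>2"]
      by (intro set_integral_mono) (auto intro: power_mono[of _ B 2, OF _ abs_ge_zero, simplified])
    then show ?thesis
      by (simp add: set_integral_const_Icc)
  next
    case False
    then show ?thesis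
      by (simp add: set_lebesgue_integral_def set_integrable_def not_integrable_integral_eq)
  qed
  then show ?thesis
    using B real_sqrt_le_mono[of _ "B\<^sup>2"] by (simp add: L2_norm_def)
qed

lemma L2_01_diff_continuous:
  assumes g: "L2_01 g" and k: "continuous_on {0..1} k"
  shows "L2_01 (\<lambda>x. g x - k x)"
proof -
  have "set_borel_measurable lborel {0..1} k"
    using set_integrable_continuous_on_Icc[OF k]
    unfolding set_integrable_def set_borel_measurable_def by (rule borel_measurable_integrable)
  then have meas: "set_borel_measurable lborel {0..1} (\<lambda>x. g x - k x)"
    using g unfolding L2_01_def set_borel_measurable_def
    by (auto simp: right_diff_distrib intro!: borel_measurable_diff)
  have "(\<lambda>x. indicator {0..1} x *\<^sub>R (g x - k x)\<^sup>2)
      = (\<lambda>x. (indicator {0..1} x *\<^sub>R (g x - k x))\<^sup>2 :: real)"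
    by (simp add: fun_eq_iff split: split_indicator)
  then have meas2: "set_borel_measurable lborel {0..1} (\<lambda>x. (g x - k x)\<^sup>2)"
    using meas unfolding set_borel_measurable_def by simp
  have "set_integrable lborel {0..1} (\<lambda>x. (k x)\<^sup>2)"
    by (rule set_integrable_continuous_on_Icc) (intro continuous_intros k)
  then have "set_integrable lborel {0..1} (\<lambda>x. 2 * (g x)\<^sup>2 + 2 * (k x)\<^sup>2)"
    using g by (simp add: L2_01_def)
  moreover have "norm ((y - z)\<^sup>2) \<le> norm (2 * y\<^sup>2 + 2 * z\<^sup>2)" for y z :: real
    using zero_le_power2[of "y + z"] zero_le_power2[of "y - z"] zero_le_power2[of y] zero_le_power2[of z]
    by (simp add: power2_diff power2_sum abs_le_iff)
  ultimately have "set_integrable lborel {0..1} (\<lambda>x. (g x - k x)\<^sup>2)"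
    by (intro set_integrable_bound[OF _ meas2]) auto
  with meas show ?thesis
    by (simp add: L2_01_def)
qed

lemma L2_norm_diff_bounded_le:
  assumes g: "L2_01 g" and gk: "L2_01 (\<lambda>x. g x - k x)"
    and K: "\<forall>x\<in>{0..1}. \<bar>k x\<bar> \<le> K"
  shows "L2_norm (\<lambda>x. g x - k x) \<le> L2_norm g + K"
proof -
  have K0: "0 \<le> K"
    using K by fastforce
  have g1: "set_integrable lborel {0..1} (\<lambda>x. \<bar>g x\<bar>)"
    using set_integrable_abs[OF L2_01_set_integrable[OF g]] by simp
  have g2: "set_integrable lborel {0..1} (\<lambda>x. (g x)\<^sup>2)"
    using g by (simp add: L2_01_def)
  have "(L2_norm (\<lambda>x. g x - k x))\<^sup>2 \<le> (LINT x:{0..1}|lborel. (\<bar>g x\<bar> + K)\<^sup>2)"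
    unfolding L2_norm_square
  proof (rule set_integral_mono)
    show "set_integrable lborel {0..1} (\<lambda>x. (\<bar>g x\<bar> + K)\<^sup>2)"
      using g1 g2 set_integrable_const_Icc[of 0 1 "K\<^sup>2"]
      by (simp add: power2_sum)
    fix x :: real
    assume "x \<in> {0..1}"
    then have "\<bar>g x - k x\<bar> \<le> \<bar>g x\<bar> + K"
      using K abs_triangle_ineq4[of "g x" "k x"] by fastforce
    then show "(g x - k x)\<^sup>2 \<le> (\<bar>g x\<bar> + K)\<^sup>2"
      using power_mono[of "\<bar>g x - k x\<bar>" _ 2] by simp
  qed (use gk in \<open>simp add: L2_01_def\<close>)
  also have "\<dots> = (LINT x:{0..1}|lborel. ((g x)\<^sup>2 + K\<^sup>2) + 2 * K * \<bar>g x\<bar>)"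
    by (simp add: power2_sum algebra_simps)
  also have "\<dots> = (LINT x:{0..1}|lborel. (g x)\<^sup>2 + K\<^sup>2)
      + (LINT x:{0..1}|lborel. 2 * K * \<bar>g x\<bar>)"
    using set_integral_add(1)[OF g2 set_integrable_const_Icc] set_integrable_mult_right[OF g1]
    by (rule set_integral_add(2))
  also have "\<dots> = (L2_norm g)\<^sup>2 + K\<^sup>2 + 2 * K * (LINT x:{0..1}|lborel. \<bar>g x\<bar>)"
    unfolding set_integral_add(2)[OF g2 set_integrable_const_Icc] set_integral_mult_right
      L2_norm_square set_integral_const_Icc[OF zero_le_one] by simp
  also have "\<dots> \<le> (L2_norm g + K)\<^sup>2"
    using mult_left_mono[OF L1_norm_le_L2_norm[OF g] K0] by (simp add: power2_sum algebra_simps)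
  finally show ?thesis
    by (rule power2_le_imp_le) (simp add: K0 L2_norm_nonneg)
qed

section \<open>Weak derivatives\<close>

lemma ennreal_eq_ennreal_uminus_iff: "ennreal y = ennreal (- y) \<longleftrightarrow> y = 0"
  by (cases "0 \<le> y") (auto simp: ennreal_neg)

text \<open>The densities \<open>max W 0\<close> and \<open>max (- W) 0\<close> define finite measures that agree on all
  rays \<open>{a<..}\<close>, hence coincide.\<close>

lemma AE_zero_if_Ioi_integrals_zero:
  fixes W :: "real \<Rightarrow> real"
  assumes W: "integrable lborel W" and tails: "\<And>a. (LINT x:{a<..}|lborel. W x) = 0"
  shows "AE x in lborel. W x = 0"
proof -
  have W_meas[measurable]: "W \<in> borel_measurable lborel"
    using W by auto
  have tail_pos_neg: "(\<integral>\<^sup>+x. ennreal (W x) * indicator {a<..} x \<partial>lborel)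
      = (\<integral>\<^sup>+x. ennreal (- W x) * indicator {a<..} x \<partial>lborel)" for a
  proof -
    let ?Wa = "\<lambda>x. W x * indicator {a<..} x"
    have Wa: "integrable lborel ?Wa"
      using W by (rule integrable_real_mult_indicator[rotated]) simp
    have "enn2real (\<integral>\<^sup>+x. ennreal (?Wa x) \<partial>lborel)
        = enn2real (\<integral>\<^sup>+x. ennreal (- ?Wa x) \<partial>lborel)"
      using real_lebesgue_integral_def[OF Wa] tails[of a]
      by (simp add: set_lebesgue_integral_def mult.commute)
    then have "ennreal (enn2real (\<integral>\<^sup>+x. ennreal (?Wa x) \<partial>lborel))
        = ennreal (enn2real (\<integral>\<^sup>+x. ennreal (- ?Wa x) \<partial>lborel))"
      by (rule arg_cong)
    then have "(\<integral>\<^sup>+x. ennreal (?Wa x) \<partial>lborel)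
        = (\<integral>\<^sup>+x. ennreal (- ?Wa x) \<partial>lborel)"
      using integrableD(2,3)[OF Wa] by (simp add: ennreal_enn2real_if)
    moreover have
      "(\<integral>\<^sup>+x. ennreal (W x) * indicator {a<..} x \<partial>lborel)
        = (\<integral>\<^sup>+x. ennreal (?Wa x) \<partial>lborel)"
      "(\<integral>\<^sup>+x. ennreal (- W x) * indicator {a<..} x \<partial>lborel)
        = (\<integral>\<^sup>+x. ennreal (- ?Wa x) \<partial>lborel)"
      by (auto intro!: nn_integral_cong split: split_indicator)
    ultimately show ?thesis
      by simp
  qed
  have finite: "(\<integral>\<^sup>+x. ennreal (W x) \<partial>lborel) \<noteq> \<infinity>"
    using integrableD(2)[OF W] .
  have "density lborel (\<lambda>x. ennreal (W x)) = density lborel (\<lambda>x. ennreal (- W x))"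
  proof (rule measure_eqI_lessThan)
    fix a :: real
    have "emeasure (density lborel (\<lambda>x. ennreal (W x))) {a<..}
        = (\<integral>\<^sup>+x. ennreal (W x) * indicator {a<..} x \<partial>lborel)"
      by (rule emeasure_density) auto
    also have "\<dots> \<le> (\<integral>\<^sup>+x. ennreal (W x) \<partial>lborel)"
      by (intro nn_integral_mono) (simp split: split_indicator)
    finally show "emeasure (density lborel (\<lambda>x. ennreal (W x))) {a<..} < \<infinity>"
      using finite by (simp add: le_less_trans less_top)
    show "emeasure (density lborel (\<lambda>x. ennreal (W x))) {a<..}
        = emeasure (density lborel (\<lambda>x. ennreal (- W x))) {a<..}"
      by (simp add: emeasure_density tail_pos_neg)
  qed simp_all
  then have "AE x in lborel. ennreal (W x) = ennreal (- W x)"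
    using finite_density_unique[of "\<lambda>x. ennreal (W x)" lborel "\<lambda>x. ennreal (- W x)"] finite
    by simp
  then show ?thesis
    by (simp add: ennreal_eq_ennreal_uminus_iff)
qed

lemma AE_zero_if_primitive_zero:
  fixes W :: "real \<Rightarrow> real"
  assumes W: "set_integrable lborel {0..1} W"
    and primitive: "\<And>x. x \<in> {0..1} \<Longrightarrow> (LINT t:{0..x}|lborel. W t) = 0"
  shows "AE x in lborel. x \<in> {0..1} \<longrightarrow> W x = 0"
proof -
  let ?W = "\<lambda>x. indicator {0..1} x * W x"
  have "(LINT x:{a<..}|lborel. ?W x) = 0" for a
  proof -
    consider "a < 0" | "0 \<le> a" "a < 1" | "1 \<le> a"
      by linarith
    then show ?thesis
    proof cases
      case 1
      then have "(LINT x:{a<..}|lborel. ?W x) = (LINT x:{0..1}|lborel. W x)"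
        unfolding set_lebesgue_integral_def
        by (intro Bochner_Integration.integral_cong) (auto split: split_indicator)
      then show ?thesis
        using primitive[of 1] by simp
    next
      case 2
      have "(LINT x:{a<..}|lborel. ?W x) = (LINT x:{a<..1}|lborel. W x)"
        unfolding set_lebesgue_integral_def
        using 2 by (intro Bochner_Integration.integral_cong) (auto split: split_indicator)
      moreover have "{0..1::real} = {0..a} \<union> {a<..1}"
        using 2 by auto
      moreover have "(LINT x:{0..a} \<union> {a<..1}|lborel. W x)
          = (LINT x:{0..a}|lborel. W x) + (LINT x:{a<..1}|lborel. W x)"
        by (rule set_integral_Un) (use 2 in \<open>auto intro: set_integrable_subset[OF W]\<close>)
      ultimately show ?thesis
        using 2 primitive[of 1] primitive[of a] by simp
    next
      case 3
      then have "(\<lambda>x. indicator {a<..} x *\<^sub>R ?W x) = (\<lambda>_. 0)"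
        by (auto simp: fun_eq_iff split: split_indicator)
      then show ?thesis
        by (simp add: set_lebesgue_integral_def)
    qed
  qed
  moreover have "integrable lborel ?W"
    using W by (simp add: set_integrable_def)
  ultimately have "AE x in lborel. ?W x = 0"
    by (intro AE_zero_if_Ioi_integrals_zero)
  then show ?thesis
    by eventually_elim (auto simp: indicator_def)
qed

lemma weak_deriv_01_unique_AE:
  assumes "weak_deriv_01 u v" "weak_deriv_01 u w"
  shows "AE x in lborel. x \<in> {0..1} \<longrightarrow> v x = w x"
proof -
  have v: "set_integrable lborel {0..1} v" and w: "set_integrable lborel {0..1} w"
    using assms L2_01_set_integrable unfolding weak_deriv_01_def by blast+
  have "AE x in lborel. x \<in> {0..1} \<longrightarrow> v x - w x = 0"
  proof (rule AE_zero_if_primitive_zero)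
    show "set_integrable lborel {0..1} (\<lambda>x. v x - w x)"
      using v w by simp
    fix x :: real
    assume x: "x \<in> {0..1}"
    have "set_integrable lborel {0..x} v" "set_integrable lborel {0..x} w"
      using x by (auto intro: set_integrable_subset[OF v] set_integrable_subset[OF w])
    moreover have "u x = u 0 + (LINT t:{0..x}|lborel. v t)" "u x = u 0 + (LINT t:{0..x}|lborel. w t)"
      using assms x unfolding weak_deriv_01_def by blast+
    ultimately show "(LINT t:{0..x}|lborel. v t - w t) = 0"
      by simp
  qed
  then show ?thesis
    by eventually_elim simp
qed

lemma L2_norm_cong_AE:
  assumes "L2_01 v" "L2_01 w" "AE x in lborel. x \<in> {0..1} \<longrightarrow> v x = w x"
  shows "L2_norm v = L2_norm w"
proof -
  have "(\<lambda>x. indicator {0..1} x *\<^sub>R (v x)\<^sup>2) \<in> borel_measurable lborel"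
    "(\<lambda>x. indicator {0..1} x *\<^sub>R (w x)\<^sup>2) \<in> borel_measurable lborel"
    using assms(1,2) by (auto simp: L2_01_def set_integrable_def)
  moreover have
    "AE x in lborel. indicator {0..1} x *\<^sub>R (v x)\<^sup>2 = indicator {0..1} x *\<^sub>R (w x)\<^sup>2"
    using assms(3) by eventually_elim (simp split: split_indicator)
  ultimately have "(LINT x:{0..1}|lborel. (v x)\<^sup>2) = (LINT x:{0..1}|lborel. (w x)\<^sup>2)"
    unfolding set_lebesgue_integral_def by (rule integral_cong_AE)
  then show ?thesis
    by (simp add: L2_norm_def)
qed

lemma H1_norm_le:
  assumes "weak_deriv_01 u v"
  shows "H1_norm u \<le> L2_norm u + L2_norm v"
proof -
  have "weak_deriv_01 u (SOME v. weak_deriv_01 u v)"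
    using assms by (rule someI[where P = "weak_deriv_01 u"])
  with assms have "L2_norm (SOME v. weak_deriv_01 u v) = L2_norm v"
    unfolding weak_deriv_01_def
    by (blast intro: L2_norm_cong_AE weak_deriv_01_unique_AE[unfolded weak_deriv_01_def])
  then show ?thesis
    unfolding H1_norm_def by (simp add: sqrt_sum_squares_le_sum L2_norm_nonneg)
qed

lemma continuous_on_primitive:
  fixes u :: "real \<Rightarrow> real"
  assumes "set_integrable lborel {0..1} u"
  shows "continuous_on {0..1} (\<lambda>x. LINT t:{0..x}|lborel. u t)"
proof -
  have "continuous_on {0..1} (\<lambda>x. integral {0..x} u)"
    using set_borel_integral_eq_integral(1)[OF assms] by (rule indefinite_integral_continuous_1)
  moreover have "integral {0..x} u = (LINT t:{0..x}|lborel. u t)" if "x \<in> {0..1}" for x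
    using that set_borel_integral_eq_integral(2)[OF set_integrable_subset[OF assms]] by simp
  ultimately show ?thesis
    by (rule continuous_on_eq)
qed

lemma weak_deriv_01_primitive:
  assumes "L2_01 v"
  shows "weak_deriv_01 (\<lambda>x. c + (LINT t:{0..x}|lborel. v t)) v"
  using assms set_integral_Icc_self[of 0 v] by (simp add: weak_deriv_01_def)

section \<open>The nonlinearity\<close>

lemma has_real_derivative_deriv_if_C1:
  assumes "d C1_differentiable_on UNIV"
  shows "(d has_real_derivative deriv d s) (at s)"
  using assms by (simp add: C1_differentiable_on_eq DERIV_deriv_iff_real_differentiable)

lemma diff_ge_of_deriv_ge:
  fixes d :: "real \<Rightarrow> real"
  assumes "\<And>s. (d has_real_derivative d' s) (at s)" "\<And>s. c \<le> d' s" "a \<le> b"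
  shows "c * (b - a) \<le> d b - d a"
proof (cases "a = b")
  case False
  with assms obtain z where "d b - d a = (b - a) * d' z"
    using MVT2[of a b d d'] by force
  then show ?thesis
    using assms(2)[of z] \<open>a \<le> b\<close> by (simp add: mult_right_mono mult.commute)
qed simp

lemma rpow_mono: "0 \<le> x \<Longrightarrow> x \<le> y \<Longrightarrow> 0 \<le> p \<Longrightarrow> rpow x p \<le> rpow y p"
  unfolding rpow_def by (auto intro: powr_mono2)

lemma rpow_mult_self: "0 \<le> x \<Longrightarrow> rpow x p * x = x powr (p + 1)"
  by (cases "x = 0") (auto simp: rpow_def powr_add)

lemma abs_le_of_deriv_growth:
  fixes d :: "real \<Rightarrow> real"
  assumes deriv: "\<And>s. (d has_real_derivative d' s) (at s)"
    and growth: "\<And>s. \<bar>d' s\<bar> \<le> d1 + d2 * rpow \<bar>s\<bar> p"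
    and "d 0 = 0" "0 \<le> d1" "0 \<le> d2" "0 \<le> p" "\<bar>s\<bar> \<le> R"
  shows "\<bar>d s\<bar> \<le> d1 * R + d2 * R powr (p + 1)"
proof -
  have R: "0 \<le> R"
    using \<open>\<bar>s\<bar> \<le> R\<close> by linarith
  have "norm (d s - d 0) \<le> (d1 + d2 * rpow R p) * norm (s - 0)"
  proof (rule field_differentiable_bound[of "{-R..R}"])
    fix z :: real
    assume "z \<in> {-R..R}"
    then have "rpow \<bar>z\<bar> p \<le> rpow R p"
      using \<open>0 \<le> p\<close> by (intro rpow_mono) auto
    then show "norm (d' z) \<le> d1 + d2 * rpow R p"
      using growth[of z] \<open>0 \<le> d2\<close> mult_left_mono by fastforce
  qed (use deriv \<open>\<bar>s\<bar> \<le> R\<close> in \<open>auto intro: has_field_derivative_at_within\<close>)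
  also have "\<dots> \<le> (d1 + d2 * rpow R p) * R"
    using \<open>\<bar>s\<bar> \<le> R\<close> assms(4,5) by (intro mult_left_mono) (auto simp: rpow_def)
  also have "\<dots> = d1 * R + d2 * R powr (p + 1)"
    by (simp add: distrib_right mult.assoc rpow_mult_self[OF R])
  finally show ?thesis
    using \<open>d 0 = 0\<close> by simp
qed

section \<open>The shooting argument\<close>

lemma expanding_abs_diff_le:
  fixes \<phi> :: "real \<Rightarrow> real"
  assumes "\<And>a b. a \<le> b \<Longrightarrow> c * (b - a) \<le> \<phi> b - \<phi> a"
  shows "c * \<bar>b - a\<bar> \<le> \<bar>\<phi> b - \<phi> a\<bar>"
  using assms[of a b] assms[of b a] by (cases "a \<le> b") (auto simp: abs_if algebra_simps)

lemma expanding_surj: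
  fixes \<phi> :: "real \<Rightarrow> real"
  assumes cont: "continuous_on UNIV \<phi>" and c: "0 < c"
    and expanding: "\<And>a b. a \<le> b \<Longrightarrow> c * (b - a) \<le> \<phi> b - \<phi> a"
  shows "\<exists>a. \<phi> a = y"
proof -
  define R where "R = \<bar>y - \<phi> 0\<bar> / c"
  have R: "0 \<le> R" "c * R = \<bar>y - \<phi> 0\<bar>"
    using c by (simp_all add: R_def)
  have "\<phi> (-R) \<le> y" "y \<le> \<phi> R"
    using expanding[of "-R" 0] expanding[of 0 R] R by auto
  then show ?thesis
    using IVT'[of \<phi> "-R" y R] cont R continuous_on_subset by fastforce
qed

locale stationary_problem =
  fixes d :: "real \<Rightarrow> real" and d0 d1 d2 p :: real and f g :: "real \<Rightarrow> real"
  assumes d_has_deriv: "\<And>s. (d has_real_derivative deriv d s) (at s)"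
    and d_zero: "d 0 = 0"
    and d0_pos: "0 < d0" and d1_nonneg: "0 \<le> d1" and d2_nonneg: "0 \<le> d2" and p_nonneg: "0 \<le> p"
    and deriv_gt: "\<And>s. d0 < deriv d s"
    and abs_deriv_le: "\<And>s. \<bar>deriv d s\<bar> \<le> d1 + d2 * rpow \<bar>s\<bar> p"
    and f: "L2_01 f" and g: "L2_01 g"
begin

definition F :: "real \<Rightarrow> real" where
  "F x = (LINT t:{0..x}|lborel. f t)"

definition shooting :: "real \<Rightarrow> real" where
  "shooting a = (LINT x:{0..1}|lborel. d (a + F x))"

definition data_size :: "real \<Rightarrow> real \<Rightarrow> real" where
  "data_size h0 h1 = L2_norm g + (\<bar>h0\<bar> + \<bar>h1\<bar>) + d1 * L2_norm f + d2 * L2_norm f powr (p + 1)"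

definition m_bound :: "real \<Rightarrow> real \<Rightarrow> real" where
  "m_bound h0 h1 = 2 / d0 * data_size h0 h1 + 2 * L2_norm f"

lemma d_continuous: "continuous_on UNIV d"
  using d_has_deriv by (meson DERIV_isCont continuous_at_imp_continuous_on)

lemma abs_d_le: "\<bar>s\<bar> \<le> R \<Longrightarrow> \<bar>d s\<bar> \<le> d1 * R + d2 * R powr (p + 1)"
  using abs_le_of_deriv_growth[OF d_has_deriv abs_deriv_le d_zero d1_nonneg d2_nonneg p_nonneg] .

lemma F_continuous: "continuous_on {0..1} F"
  unfolding F_def by (rule continuous_on_primitive[OF L2_01_set_integrable[OF f]])

lemma abs_F_le: "x \<in> {0..1} \<Longrightarrow> \<bar>F x\<bar> \<le> L2_norm f"
  unfolding F_def by (rule abs_primitive_le_L2_norm[OF f])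

lemma F_zero: "F 0 = 0"
  using set_integral_Icc_self[of 0 f] by (simp add: F_def)

lemma d_shift_F_continuous: "continuous_on {0..1} (\<lambda>x. d (a + F x))"
  by (rule continuous_on_compose2[OF d_continuous]) (auto intro!: continuous_intros F_continuous)

lemma d_shift_F_integrable: "set_integrable lborel {0..1} (\<lambda>x. d (a + F x))"
  by (rule set_integrable_continuous_on_Icc[OF d_shift_F_continuous])

lemma shooting_continuous: "continuous_on UNIV shooting"
proof -
  have "continuous_on (UNIV \<times> {0..1}) (\<lambda>z. fst z + F (snd z))"
    by (intro continuous_intros continuous_on_compose2[OF F_continuous]) auto
  then have "continuous_on (UNIV \<times> {0..1}) (\<lambda>(a, x). d (a + F x))"
    unfolding case_prod_beta by (rule continuous_on_compose2[OF d_continuous]) auto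
  then have "continuous_on UNIV (\<lambda>a. integral {0..1} (\<lambda>x. d (a + F x)))"
    using integral_continuous_on_param[of UNIV 0 1 "\<lambda>a x. d (a + F x)"] by simp
  moreover have "shooting a = integral {0..1} (\<lambda>x. d (a + F x))" for a
    unfolding shooting_def by (rule set_borel_integral_eq_integral(2)[OF d_shift_F_integrable])
  ultimately show ?thesis
    by (simp add: fun_eq_iff flip: shooting_def)
qed

lemma shooting_expanding: "a \<le> b \<Longrightarrow> d0 * (b - a) \<le> shooting b - shooting a"
proof -
  assume "a \<le> b"
  have "d0 * (b - a) = (LINT x:{0..1::real}|lborel. d0 * (b - a))"
    by (simp only: set_integral_const_Icc[OF zero_le_one]) simp
  also have "\<dots> \<le> (LINT x:{0..1}|lborel. d (b + F x) - d (a + F x))"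
  proof (rule set_integral_mono)
    fix x :: real
    have "d0 * ((b + F x) - (a + F x)) \<le> d (b + F x) - d (a + F x)"
      using \<open>a \<le> b\<close> by (intro diff_ge_of_deriv_ge[OF d_has_deriv less_imp_le[OF deriv_gt]]) simp
    then show "d0 * (b - a) \<le> d (b + F x) - d (a + F x)"
      by simp
  qed (auto intro: d_shift_F_integrable set_integrable_const_Icc)
  also have "\<dots> = shooting b - shooting a"
    unfolding shooting_def by (rule set_integral_diff(2)[OF d_shift_F_integrable d_shift_F_integrable])
  finally show ?thesis .
qed

lemma abs_shooting_zero_le: "\<bar>shooting 0\<bar> \<le> d1 * L2_norm f + d2 * L2_norm f powr (p + 1)"
proof -
  have "\<bar>shooting 0\<bar> \<le> (LINT x:{0..1}|lborel. \<bar>d (0 + F x)\<bar>)"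
    unfolding shooting_def using set_integral_norm_bound[OF d_shift_F_integrable[of 0]] by simp
  also have "\<dots> \<le> (LINT x:{0..1::real}|lborel. d1 * L2_norm f + d2 * L2_norm f powr (p + 1))"
  proof (rule set_integral_mono)
    show "set_integrable lborel {0..1} (\<lambda>x. \<bar>d (0 + F x)\<bar>)"
      by (rule set_integrable_abs[OF d_shift_F_integrable])
    fix x :: real
    assume "x \<in> {0..1}"
    then show "\<bar>d (0 + F x)\<bar> \<le> d1 * L2_norm f + d2 * L2_norm f powr (p + 1)"
      using abs_d_le abs_F_le by simp
  qed (rule set_integrable_const_Icc)
  finally show ?thesis
    using set_integral_const_Icc[of 0 1 "d1 * L2_norm f + d2 * L2_norm f powr (p + 1)"] by simp
qed

lemma weak_deriv_f_eq_shift_F: "weak_deriv_01 m f \<Longrightarrow> x \<in> {0..1} \<Longrightarrow> m x = m 0 + F x"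
  unfolding weak_deriv_01_def F_def by blast

lemma boundary_value:
  assumes m: "weak_deriv_01 m f" and P: "weak_deriv_01 P (\<lambda>x. g x - d (m x))"
  shows "P 1 = P 0 + (LINT x:{0..1}|lborel. g x) - shooting (m 0)"
proof -
  have "1 \<in> {0..1::real}"
    by simp
  then have "P 1 = P 0 + (LINT x:{0..1}|lborel. g x - d (m x))"
    using P unfolding weak_deriv_01_def by blast
  also have "(LINT x:{0..1}|lborel. g x - d (m x)) = (LINT x:{0..1}|lborel. g x - d (m 0 + F x))"
  proof (intro set_lebesgue_integral_cong allI impI)
    fix x :: real
    assume "x \<in> {0..1}"
    then show "g x - d (m x) = g x - d (m 0 + F x)"
      using weak_deriv_f_eq_shift_F[OF m \<open>x \<in> {0..1}\<close>] by simp
  qed simp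
  also have "\<dots> = (LINT x:{0..1}|lborel. g x) - shooting (m 0)"
    unfolding shooting_def by (rule set_integral_diff(2)[OF L2_01_set_integrable[OF g] d_shift_F_integrable])
  finally show ?thesis
    by simp
qed

lemma shooting_root:
  obtains a where "shooting a = h0 - h1 + (LINT x:{0..1}|lborel. g x)"
    and "\<bar>a\<bar> \<le> data_size h0 h1 / d0"
proof -
  obtain a where a: "shooting a = h0 - h1 + (LINT x:{0..1}|lborel. g x)"
    using expanding_surj[OF shooting_continuous d0_pos shooting_expanding] by blast
  have "d0 * \<bar>a - 0\<bar> \<le> \<bar>shooting a - shooting 0\<bar>"
    by (rule expanding_abs_diff_le[OF shooting_expanding])
  also have "\<dots> \<le> \<bar>h0\<bar> + \<bar>h1\<bar> + L2_norm g + \<bar>shooting 0\<bar>"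
    using a abs_primitive_le_L2_norm[OF g, of 1] by simp
  also have "\<dots> \<le> data_size h0 h1"
    using abs_shooting_zero_le by (simp add: data_size_def)
  finally have "\<bar>a\<bar> \<le> data_size h0 h1 / d0"
    using d0_pos by (simp add: field_simps)
  with a show ?thesis
    by (rule that)
qed

definition m_of :: "real \<Rightarrow> real \<Rightarrow> real" where
  "m_of a x = a + F x"

definition p_of :: "real \<Rightarrow> real \<Rightarrow> real \<Rightarrow> real" where
  "p_of h0 a x = h0 + (LINT t:{0..x}|lborel. g t - d (m_of a t))"

lemma g_minus_d_m_of_L2: "L2_01 (\<lambda>x. g x - d (m_of a x))"
  unfolding m_of_def by (rule L2_01_diff_continuous[OF g d_shift_F_continuous])

lemma m_of_weak_deriv: "weak_deriv_01 (m_of a) f"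
  unfolding m_of_def[abs_def] F_def by (rule weak_deriv_01_primitive[OF f])

lemma p_of_weak_deriv: "weak_deriv_01 (p_of h0 a) (\<lambda>x. g x - d (m_of a x))"
  unfolding p_of_def[abs_def] by (rule weak_deriv_01_primitive[OF g_minus_d_m_of_L2])

lemma p_of_zero: "p_of h0 a 0 = h0"
  using set_integral_Icc_self[of 0] by (simp add: p_of_def)

lemma p_of_one:
  assumes "shooting a = h0 - h1 + (LINT x:{0..1}|lborel. g x)"
  shows "p_of h0 a 1 = h1"
  using boundary_value[OF m_of_weak_deriv p_of_weak_deriv] assms
  by (simp add: p_of_zero m_of_def F_zero)

lemma solution_unique:
  assumes m: "weak_deriv_01 m f" and P: "weak_deriv_01 P (\<lambda>x. g x - d (m x))" "P 0 = h0" "P 1 = h1"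
    and m': "weak_deriv_01 m' f" and P': "weak_deriv_01 P' (\<lambda>x. g x - d (m' x))" "P' 0 = h0" "P' 1 = h1"
    and x: "x \<in> {0..1}"
  shows "P' x = P x \<and> m' x = m x"
proof -
  have "shooting (m' 0) = shooting (m 0)"
    using boundary_value[OF m P(1)] boundary_value[OF m' P'(1)] P(2,3) P'(2,3) by simp
  then have "d0 * \<bar>m 0 - m' 0\<bar> \<le> 0"
    using expanding_abs_diff_le[OF shooting_expanding, of "m 0" "m' 0"] by simp
  then have "m' 0 = m 0"
    using d0_pos by (simp add: mult_le_0_iff)
  then have m_eq: "m' y = m y" if "y \<in> {0..1}" for y
    using weak_deriv_f_eq_shift_F[OF m that] weak_deriv_f_eq_shift_F[OF m' that] by simp
  have "P' x = P' 0 + (LINT t:{0..x}|lborel. g t - d (m' t))"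
    "P x = P 0 + (LINT t:{0..x}|lborel. g t - d (m t))"
    using P(1) P'(1) x unfolding weak_deriv_01_def by blast+
  moreover have "(LINT t:{0..x}|lborel. g t - d (m' t)) = (LINT t:{0..x}|lborel. g t - d (m t))"
    using x m_eq by (intro set_lebesgue_integral_cong) auto
  ultimately show ?thesis
    using P(2) P'(2) m_eq[OF x] by simp
qed

lemma data_size_nonneg: "0 \<le> data_size h0 h1"
  using d1_nonneg d2_nonneg by (simp add: data_size_def L2_norm_nonneg)

lemma abs_m_of_le:
  assumes "\<bar>a\<bar> \<le> data_size h0 h1 / d0" "x \<in> {0..1}"
  shows "\<bar>m_of a x\<bar> \<le> m_bound h0 h1"
proof -
  have "\<bar>m_of a x\<bar> \<le> data_size h0 h1 / d0 + L2_norm f"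
    using assms abs_F_le[of x] by (simp add: m_of_def)
  also have "\<dots> \<le> m_bound h0 h1"
    using divide_right_mono[of "data_size h0 h1" "2 * data_size h0 h1" d0] data_size_nonneg[of h0 h1]
      d0_pos L2_norm_nonneg[of f]
    by (simp add: m_bound_def)
  finally show ?thesis .
qed

lemma H1_norm_m_of_le:
  assumes "\<bar>a\<bar> \<le> data_size h0 h1 / d0"
  shows "H1_norm (m_of a) \<le> m_bound h0 h1"
proof -
  have "L2_norm (m_of a) \<le> data_size h0 h1 / d0 + L2_norm f"
    using assms abs_F_le by (intro L2_norm_le_if_bounded) (fastforce simp: m_of_def)
  then have "H1_norm (m_of a) \<le> data_size h0 h1 / d0 + 2 * L2_norm f"
    using H1_norm_le[OF m_of_weak_deriv, of a] by simp
  also have "\<dots> \<le> m_bound h0 h1"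
    using divide_right_mono[of "data_size h0 h1" "2 * data_size h0 h1" d0] data_size_nonneg[of h0 h1] d0_pos
    by (simp add: m_bound_def)
  finally show ?thesis .
qed

lemma H1_norm_p_of_le:
  assumes "\<bar>a\<bar> \<le> data_size h0 h1 / d0"
  defines "M \<equiv> m_bound h0 h1"
  shows "H1_norm (p_of h0 a) \<le> 2 * (L2_norm g + (\<bar>h0\<bar> + \<bar>h1\<bar>) + d1 * M + d2 * M powr (p + 1))"
proof -
  define K where "K = d1 * M + d2 * M powr (p + 1)"
  have "\<forall>x\<in>{0..1}. \<bar>d (m_of a x)\<bar> \<le> K"
    using abs_d_le abs_m_of_le[OF assms(1)] by (simp add: K_def M_def)
  then have source: "L2_norm (\<lambda>x. g x - d (m_of a x)) \<le> L2_norm g + K"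
    by (rule L2_norm_diff_bounded_le[OF g g_minus_d_m_of_L2])
  have "\<bar>p_of h0 a x\<bar> \<le> \<bar>h0\<bar> + (L2_norm g + K)" if "x \<in> {0..1}" for x
    using abs_primitive_le_L2_norm[OF g_minus_d_m_of_L2[of a] that] source
      abs_triangle_ineq[of h0 "LINT t:{0..x}|lborel. g t - d (m_of a t)"]
    unfolding p_of_def by linarith
  then have "L2_norm (p_of h0 a) \<le> \<bar>h0\<bar> + (L2_norm g + K)"
    by (intro L2_norm_le_if_bounded) blast
  then have "H1_norm (p_of h0 a) \<le> \<bar>h0\<bar> + 2 * (L2_norm g + K)"
    using H1_norm_le[OF p_of_weak_deriv, of h0 a] source by simp
  also have "\<dots> \<le> 2 * (L2_norm g + (\<bar>h0\<bar> + \<bar>h1\<bar>) + K)"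
    by simp
  finally show ?thesis
    by (simp add: K_def)
qed

end

theorem lemma1:
  "\<exists>c>0. \<forall>(d::real \<Rightarrow> real) (d0::real) (d1::real) (d2::real) (p::real)
            (f::real \<Rightarrow> real) (g::real \<Rightarrow> real) (h0::real) (h1::real).
     d C1_differentiable_on UNIV \<and> d 0 = 0 \<and> d0 > 0 \<and> d1 \<ge> 0 \<and> d2 \<ge> 0 \<and> p \<ge> 0 \<and>
     (\<forall>s. deriv d s > d0) \<and> (\<forall>s. \<bar>deriv d s\<bar> \<le> d1 + d2 * rpow \<bar>s\<bar> p) \<and>
     L2_01 f \<and> L2_01 g
     \<longrightarrow>
     (\<exists>P m. H1_01 P \<and> H1_01 m \<and> weak_deriv_01 m f \<and>
            weak_deriv_01 P (\<lambda>x. g x - d (m x)) \<and> P 0 = h0 \<and> P 1 = h1 \<and>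
            (\<forall>P' m'. H1_01 P' \<and> H1_01 m' \<and> weak_deriv_01 m' f \<and>
                     weak_deriv_01 P' (\<lambda>x. g x - d (m' x)) \<and> P' 0 = h0 \<and> P' 1 = h1
                     \<longrightarrow> (\<forall>x\<in>{0..1}. P' x = P x \<and> m' x = m x)) \<and>
            (let M = c / d0 * (L2_norm g + (\<bar>h0\<bar> + \<bar>h1\<bar>) + d1 * L2_norm f
                               + d2 * L2_norm f powr (p + 1)) + c * L2_norm f
             in H1_norm m \<le> M \<and>
                H1_norm P \<le> c * (L2_norm g + (\<bar>h0\<bar> + \<bar>h1\<bar>) + d1 * M + d2 * M powr (p + 1))))"
proof (rule exI[of _ 2], intro conjI allI impI, goal_cases)
  case 1
  show ?case
    by simp
next
  case (2 d d0 d1 d2 p f g h0 h1)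
  then interpret stationary_problem d d0 d1 d2 p f g
    by unfold_locales (auto intro: has_real_derivative_deriv_if_C1)
  obtain a where root: "shooting a = h0 - h1 + (LINT x:{0..1}|lborel. g x)"
    and a: "\<bar>a\<bar> \<le> data_size h0 h1 / d0"
    by (rule shooting_root)
  have M: "2 / d0 * (L2_norm g + (\<bar>h0\<bar> + \<bar>h1\<bar>) + d1 * L2_norm f + d2 * L2_norm f powr (p + 1))
      + 2 * L2_norm f = m_bound h0 h1"
    by (simp add: m_bound_def data_size_def)
  note solution = m_of_weak_deriv[of a] p_of_weak_deriv[of h0 a] p_of_zero[of h0 a] p_of_one[OF root]
  show ?case
    unfolding Let_def M H1_01_def
    by (rule exI[of _ "p_of h0 a"], rule exI[of _ "m_of a"])
      (use solution solution_unique[OF solution] H1_norm_m_of_le[OF a] H1_norm_p_of_le[OF a] in blast)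
qed

end
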